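(* Let $(\omega,\gamma)$ be a left-invariant half-flat $\mathrm{SU}(3)$-structure on $M=S^3\times S^3$, written as $\omega\in A\otimes B$, $\gamma=a\,e^{135}+b\,e^{246}+d\beta$ with $\beta\in A\otimes B$, and let $P=\Phi(K_\omega)$, $Q=\Phi(K_\beta)$. Suppose the structure is coupled, i.e. $d\omega=\mu\gamma$ for some constant $\mu\in\mathbb R$. Then $\mu\neq0$, $a=b=0$ (so $[\gamma]=0$ in $H^3(M)$), and $P=\mu Q$.
   Context: $M=S^3\times S^3$ as a Lie group; left-invariant 1-forms $e^1,\dots,e^6$ with $de^1=e^{35},\ de^3=e^{51},\ de^5=e^{13},\ de^2=e^{46},\ de^4=e^{62},\ de^6=e^{24}$; $A=\mathrm{span}(e^1,e^3,e^5)$, $B=\mathrm{span}(e^2,e^4,e^6)$. For $\eta=\sum k_{ij}e^{2i-1}\wedge e^{2j}\in A\otimes B$, $K_\eta=(k_{ij})$. An $\mathrm{SU}(3)$-structure is a pair $(\omega,\gamma)$, $\omega$ a nondegenerate 2-form, $\gamma$ a stable 3-form with stabiliser (up to $\mathbb Z/2$) $\mathrm{SL}(3,\mathbb C)$, with $\omega\wedge\gamma=0$, $3\gamma\wedge\hat\gamma=2\omega^3$, $\omega(\cdot,J\cdot)>0$; half-flat means $d\gamma=0=d(\omega^2)$. For such structures one always has $\omega\in A\otimes B$ and $\gamma=ae^{135}+be^{246}+d\beta$ with $\beta\in A\otimes B$. $\Phi\colon\mathbb R^{3\times3}\to S^2_0(\mathbb R^4)$ is the linear map with diagonal $(-k_{11}-k_{22}-k_{33},\,-k_{11}+k_{22}+k_{33},\,k_{11}-k_{22}+k_{33},\,k_{11}+k_{22}-k_{33})$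 and off-diagonal entries $S_{12}=k_{23}-k_{32}$, $S_{13}=-k_{13}+k_{31}$, $S_{14}=k_{12}-k_{21}$, $S_{23}=-k_{12}-k_{21}$, $S_{24}=-k_{13}-k_{31}$, $S_{34}=-k_{23}-k_{32}$. *)

theory Defs
  imports Complex_Main
begin

text \<open>Left-invariant forms on S^3 x S^3 = forms on the Lie algebra dual with basis e^1..e^6.
  A form is represented by its coefficient function: alpha I is the coefficient of
  e^{i1} wedge ... wedge e^{ik} where I = {i1 < ... < ik} is a subset of {1..6}.\<close>

type_synonym form = "nat set \<Rightarrow> real"

definition zero_form :: form where "zero_form = (\<lambda>_. 0)"

text \<open>Sign of the shuffle putting e^I wedge e^J into increasing order.\<close>
definition sgn_sh :: "nat set \<Rightarrow> nat set \<Rightarrow> real" where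
  "sgn_sh I J = (-1) ^ card {(i, j). i \<in> I \<and> j \<in> J \<and> j < i}"

definition wedge :: "form \<Rightarrow> form \<Rightarrow> form" where
  "wedge \<alpha> \<beta> = (\<lambda>K. if K \<subseteq> {1..6}
      then (\<Sum>I\<in>Pow K. sgn_sh I (K - I) * \<alpha> I * \<beta> (K - I)) else 0)"

definition eb :: "nat \<Rightarrow> form" where
  "eb i = (\<lambda>I. if I = {i} then 1 else 0)"

definition is_one_form :: "form \<Rightarrow> bool" where
  "is_one_form f \<longleftrightarrow> (\<forall>I. f I \<noteq> 0 \<longrightarrow> (\<exists>i\<in>{1..6}. I = {i}))"

definition de1 :: "nat \<Rightarrow> form" where
  "de1 k = (if k = 1 then wedge (eb 3) (eb 5)
       else if k = 3 then wedge (eb 5) (eb 1)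
       else if k = 5 then wedge (eb 1) (eb 3)
       else if k = 2 then wedge (eb 4) (eb 6)
       else if k = 4 then wedge (eb 6) (eb 2)
       else if k = 6 then wedge (eb 2) (eb 4)
       else zero_form)"

definition interior :: "nat \<Rightarrow> form \<Rightarrow> form" where
  "interior k \<alpha> = (\<lambda>J. if k \<notin> J then sgn_sh {k} J * \<alpha> (insert k J) else 0)"

text \<open>Exterior derivative of left-invariant forms: the unique antiderivation of degree 1
  extending e^k |-> de^k, i.e. d = sum_k de^k wedge (interior e_k).\<close>
definition dext :: "form \<Rightarrow> form" where
  "dext \<alpha> = (\<lambda>K. \<Sum>k\<in>{1..6}. wedge (de1 k) (interior k \<alpha>) K)"

text \<open>SU(3)-structure (omega, gamma): there is a coframe f^1..f^6 in which
  omega = f^12 + f^34 + f^56 and gamma = Re((f^1+i f^2)(f^3+i f^4)(f^5+i f^6)).\<close>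
definition w3 :: "form \<Rightarrow> form \<Rightarrow> form \<Rightarrow> form" where
  "w3 x y z = wedge x (wedge y z)"

definition su3_structure :: "form \<Rightarrow> form \<Rightarrow> bool" where
  "su3_structure \<omega> \<gamma> \<longleftrightarrow> (\<exists>f :: nat \<Rightarrow> form.
      (\<forall>i\<in>{1..6}. is_one_form (f i)) \<and>
      wedge (f 1) (wedge (f 2) (wedge (f 3) (wedge (f 4) (wedge (f 5) (f 6))))) \<noteq> zero_form \<and>
      \<omega> = (\<lambda>I. wedge (f 1) (f 2) I + wedge (f 3) (f 4) I + wedge (f 5) (f 6) I) \<and>
      \<gamma> = (\<lambda>I. w3 (f 1) (f 3) (f 5) I - w3 (f 1) (f 4) (f 6) I
               - w3 (f 2) (f 3) (f 6) I - w3 (f 2) (f 4) (f 5) I))"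

definition half_flat :: "form \<Rightarrow> form \<Rightarrow> bool" where
  "half_flat \<omega> \<gamma> \<longleftrightarrow> su3_structure \<omega> \<gamma> \<and> dext \<gamma> = zero_form \<and> dext (wedge \<omega> \<omega>) = zero_form"

definition AB_form :: "(nat \<Rightarrow> nat \<Rightarrow> real) \<Rightarrow> form" where
  "AB_form K = (\<lambda>I. \<Sum>i\<in>{1..3}. \<Sum>j\<in>{1..3}. K i j * wedge (eb (2*i - 1)) (eb (2*j)) I)"

text \<open>The linear map Phi : R^{3x3} -> S^2_0(R^4), as a 4x4 matrix indexed by 1..4
  (entries outside this range are 0).\<close>
definition Phi :: "(nat \<Rightarrow> nat \<Rightarrow> real) \<Rightarrow> nat \<Rightarrow> nat \<Rightarrow> real" where
  "Phi k r s = (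
     if r = 1 \<and> s = 1 then - k 1 1 - k 2 2 - k 3 3
     else if r = 2 \<and> s = 2 then - k 1 1 + k 2 2 + k 3 3
     else if r = 3 \<and> s = 3 then k 1 1 - k 2 2 + k 3 3
     else if r = 4 \<and> s = 4 then k 1 1 + k 2 2 - k 3 3
     else if {r, s} = {1, 2} then k 2 3 - k 3 2
     else if {r, s} = {1, 3} then - k 1 3 + k 3 1
     else if {r, s} = {1, 4} then k 1 2 - k 2 1
     else if {r, s} = {2, 3} then - k 1 2 - k 2 1
     else if {r, s} = {2, 4} then - k 1 3 - k 3 1
     else if {r, s} = {3, 4} then - k 2 3 - k 3 2
     else 0)"

end

theory Submission
  imports Defs
begin

text \<open>Since \<open>d\<close> maps \<open>A \<otimes> B\<close> into
  \<open>\<Lambda>\<^sup>2A \<otimes> B \<oplus> A \<otimes> \<Lambda>\<^sup>2B\<close>, the \<open>e\<^sup>1\<^sup>3\<^sup>5\<close> and \<open>e\<^sup>2\<^sup>4\<^sup>6\<close> coefficients give \<open>\<mu>a = \<mu>b = 0\<close>.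
  The \<open>\<Lambda>\<^sup>2A \<otimes> B\<close> component of \<open>d(e\<^sup>2\<^sup>i\<^sup>-\<^sup>1 \<and> e\<^sup>2\<^sup>j) = de\<^sup>2\<^sup>i\<^sup>-\<^sup>1 \<and> e\<^sup>2\<^sup>j\<close> is a basis vector, and
  these are distinct for distinct \<open>(i, j)\<close>; so the coefficients of \<open>d\<eta>\<close> there are, up to fixed
  signs, the entries of \<open>K\<^sub>\<eta>\<close>. Hence \<open>K\<^sub>\<omega> = \<mu>K\<^sub>\<beta>\<close>, and \<open>P = \<mu>Q\<close> by linearity of \<open>\<Phi>\<close>.
  Finally \<open>\<mu> \<noteq> 0\<close> because \<open>\<omega> \<noteq> 0\<close>: for an adapted coframe the nonzero top coefficient of
  \<open>f\<^sup>1 \<and> \<dots> \<and> f\<^sup>6\<close> equals the Pfaffian of \<open>\<omega> = f\<^sup>1\<^sup>2 + f\<^sup>3\<^sup>4 + f\<^sup>5\<^sup>6\<close>.\<close>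

lemma sgn_sh_eq_prod:
  assumes "finite I" "finite J"
  shows "sgn_sh I J = (\<Prod>i\<in>I. \<Prod>j\<in>J. if j < i then -1 else 1)"
proof -
  have "(\<Prod>i\<in>I. \<Prod>j\<in>J. if j < i then -1 else (1::real)) =
        (\<Prod>x\<in>I \<times> J. if snd x < fst x then -1 else 1)"
    by (simp add: prod.cartesian_product case_prod_beta)
  also have "\<dots> = (\<Prod>x\<in>{x\<in>I \<times> J. snd x < fst x}. -1)"
    using assms by (simp add: prod.If_cases Int_def conj_commute)
  also have "{x\<in>I \<times> J. snd x < fst x} = {(i, j). i \<in> I \<and> j \<in> J \<and> j < i}"
    by auto
  finally show ?thesis
    by (simp add: sgn_sh_def)
qed

lemma wedge_eq_Pow_sum:
  "K \<subseteq> {1..6} \<Longrightarrow> wedge \<alpha> \<beta> K = (\<Sum>I\<in>Pow K. sgn_sh I (K - I) * \<alpha> I * \<beta> (K - I))"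
  by (simp add: wedge_def)

lemma wedge_outside: "\<not> K \<subseteq> {1..6} \<Longrightarrow> wedge \<alpha> \<beta> K = 0"
  by (simp add: wedge_def)

lemma wedge_monomial_left:
  assumes "\<And>I. I \<noteq> S \<Longrightarrow> \<alpha> I = 0"
  shows "wedge \<alpha> \<beta> K =
    (if K \<subseteq> {1..6} \<and> S \<subseteq> K then sgn_sh S (K - S) * \<alpha> S * \<beta> (K - S) else 0)"
proof (cases "K \<subseteq> {1..6}")
  case True
  then have "finite K"
    by (rule finite_subset) simp
  have "wedge \<alpha> \<beta> K = (\<Sum>I\<in>{I\<in>Pow K. I = S}. sgn_sh I (K - I) * \<alpha> I * \<beta> (K - I))"
    unfolding wedge_eq_Pow_sum[OF True]
    using \<open>finite K\<close> assms by (intro sum.mono_neutral_cong_right) auto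
  also have "{I\<in>Pow K. I = S} = (if S \<subseteq> K then {S} else {})"
    by auto
  finally show ?thesis
    using True by simp
qed (simp add: wedge_outside)

lemma wedge_eb_left:
  "wedge (eb i) \<beta> K = (if K \<subseteq> {1..6} \<and> i \<in> K then sgn_sh {i} (K - {i}) * \<beta> (K - {i}) else 0)"
  by (subst wedge_monomial_left[where S = "{i}"]) (auto simp: eb_def)

lemma wedge_eb_eb:
  "wedge (eb i) (eb j) =
    (\<lambda>K. if i \<in> {1..6} \<and> j \<in> {1..6} \<and> i \<noteq> j \<and> K = {i, j} then (if j < i then -1 else 1) else 0)"
proof
  fix K
  show "wedge (eb i) (eb j) K =
    (if i \<in> {1..6} \<and> j \<in> {1..6} \<and> i \<noteq> j \<and> K = {i, j} then (if j < i then -1 else 1) else 0)"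
  proof (cases "i \<noteq> j \<and> K = {i, j}")
    case True
    then have "K - {i} = {j}"
      by auto
    then show ?thesis
      unfolding wedge_eb_left using True by (simp add: eb_def sgn_sh_eq_prod)
  next
    case False
    then have "\<not> (i \<in> K \<and> K - {i} = {j})"
      by auto
    then show ?thesis
      unfolding wedge_eb_left using False by (auto simp: eb_def)
  qed
qed

lemma wedge_one_form_left:
  assumes "is_one_form h"
  shows "wedge h g K =
    (if K \<subseteq> {1..6} then (\<Sum>p\<in>K. sgn_sh {p} (K - {p}) * h {p} * g (K - {p})) else 0)"
proof (cases "K \<subseteq> {1..6}")
  case True
  then have "finite K"
    by (rule finite_subset) simp
  have "h I = 0" if "I \<notin> (\<lambda>p. {p}) ` K" "I \<subseteq> K" for I
    using assms that unfolding is_one_form_def by blast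
  then have "wedge h g K = (\<Sum>I\<in>(\<lambda>p. {p}) ` K. sgn_sh I (K - I) * h I * g (K - I))"
    unfolding wedge_eq_Pow_sum[OF True]
    using \<open>finite K\<close> by (intro sum.mono_neutral_cong_right) auto
  also have "\<dots> = (\<Sum>p\<in>K. sgn_sh {p} (K - {p}) * h {p} * g (K - {p}))"
    by (simp add: sum.reindex)
  finally show ?thesis
    using True by simp
qed (simp add: wedge_outside)

lemma wedge_one_form_left_2:
  assumes "is_one_form h" "1 \<le> p1" "p1 < p2" "p2 \<le> 6"
  shows "wedge h g {p1, p2} = h {p1} * g {p2} - h {p2} * g {p1}"
  using assms by (subst wedge_one_form_left) (auto simp: sgn_sh_eq_prod insert_Diff_if insert_commute)

lemma wedge_one_form_left_3:
  assumes "is_one_form h" "1 \<le> p1" "p1 < p2" "p2 < p3" "p3 \<le> 6"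
  shows "wedge h g {p1, p2, p3} = h {p1} * g {p2, p3} - h {p2} * g {p1, p3} + h {p3} * g {p1, p2}"
  using assms by (subst wedge_one_form_left) (auto simp: sgn_sh_eq_prod insert_Diff_if insert_commute)

lemma wedge_one_form_left_4:
  assumes "is_one_form h" "1 \<le> p1" "p1 < p2" "p2 < p3" "p3 < p4" "p4 \<le> 6"
  shows "wedge h g {p1, p2, p3, p4} =
    h {p1} * g {p2, p3, p4} - h {p2} * g {p1, p3, p4} + h {p3} * g {p1, p2, p4} - h {p4} * g {p1, p2, p3}"
  using assms by (subst wedge_one_form_left) (auto simp: sgn_sh_eq_prod insert_Diff_if insert_commute)

lemma wedge_one_form_left_5:
  assumes "is_one_form h" "1 \<le> p1" "p1 < p2" "p2 < p3" "p3 < p4" "p4 < p5" "p5 \<le> 6"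
  shows "wedge h g {p1, p2, p3, p4, p5} =
    h {p1} * g {p2, p3, p4, p5} - h {p2} * g {p1, p3, p4, p5} + h {p3} * g {p1, p2, p4, p5}
    - h {p4} * g {p1, p2, p3, p5} + h {p5} * g {p1, p2, p3, p4}"
  using assms by (subst wedge_one_form_left) (auto simp: sgn_sh_eq_prod insert_Diff_if insert_commute)

lemma wedge_one_form_left_6:
  assumes "is_one_form h" "1 \<le> p1" "p1 < p2" "p2 < p3" "p3 < p4" "p4 < p5" "p5 < p6" "p6 \<le> 6"
  shows "wedge h g {p1, p2, p3, p4, p5, p6} =
    h {p1} * g {p2, p3, p4, p5, p6} - h {p2} * g {p1, p3, p4, p5, p6}
    + h {p3} * g {p1, p2, p4, p5, p6} - h {p4} * g {p1, p2, p3, p5, p6}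
    + h {p5} * g {p1, p2, p3, p4, p6} - h {p6} * g {p1, p2, p3, p4, p5}"
  using assms by (subst wedge_one_form_left) (auto simp: sgn_sh_eq_prod insert_Diff_if insert_commute)

definition pfaffian :: "form \<Rightarrow> real" where
  "pfaffian \<sigma> =
      \<sigma> {1,2} * \<sigma> {3,4} * \<sigma> {5,6} - \<sigma> {1,2} * \<sigma> {3,5} * \<sigma> {4,6} + \<sigma> {1,2} * \<sigma> {3,6} * \<sigma> {4,5}
    - \<sigma> {1,3} * \<sigma> {2,4} * \<sigma> {5,6} + \<sigma> {1,3} * \<sigma> {2,5} * \<sigma> {4,6} - \<sigma> {1,3} * \<sigma> {2,6} * \<sigma> {4,5}
    + \<sigma> {1,4} * \<sigma> {2,3} * \<sigma> {5,6} - \<sigma> {1,4} * \<sigma> {2,5} * \<sigma> {3,6} + \<sigma> {1,4} * \<sigma> {2,6} * \<sigma> {3,5}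
    - \<sigma> {1,5} * \<sigma> {2,3} * \<sigma> {4,6} + \<sigma> {1,5} * \<sigma> {2,4} * \<sigma> {3,6} - \<sigma> {1,5} * \<sigma> {2,6} * \<sigma> {3,4}
    + \<sigma> {1,6} * \<sigma> {2,3} * \<sigma> {4,5} - \<sigma> {1,6} * \<sigma> {2,4} * \<sigma> {3,5} + \<sigma> {1,6} * \<sigma> {2,5} * \<sigma> {3,4}"

lemma wedge6_top_eq_pfaffian:
  assumes "is_one_form f1" "is_one_form f2" "is_one_form f3"
    and "is_one_form f4" "is_one_form f5" "is_one_form f6"
  shows "wedge f1 (wedge f2 (wedge f3 (wedge f4 (wedge f5 f6)))) {1,2,3,4,5,6} =
    pfaffian (\<lambda>I. wedge f1 f2 I + wedge f3 f4 I + wedge f5 f6 I)"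
  unfolding pfaffian_def
  by (simp add: assms wedge_one_form_left_2 wedge_one_form_left_3 wedge_one_form_left_4
      wedge_one_form_left_5 wedge_one_form_left_6) algebra

definition homogeneous :: "form \<Rightarrow> nat \<Rightarrow> bool" where
  "homogeneous \<alpha> n \<longleftrightarrow> (\<forall>I. \<alpha> I \<noteq> 0 \<longrightarrow> card I = n)"

lemma homogeneous_one_form: "is_one_form f \<Longrightarrow> homogeneous f 1"
  unfolding homogeneous_def is_one_form_def by fastforce

lemma homogeneous_wedge:
  assumes "homogeneous \<alpha> p" "homogeneous \<beta> q"
  shows "homogeneous (wedge \<alpha> \<beta>) (p + q)"
  unfolding homogeneous_def
proof (intro allI impI)
  fix K
  assume nonzero: "wedge \<alpha> \<beta> K \<noteq> 0"
  then have K: "K \<subseteq> {1..6}"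
    by (meson wedge_outside)
  then have "finite K"
    by (rule finite_subset) simp
  from nonzero have "(\<Sum>I\<in>Pow K. sgn_sh I (K - I) * \<alpha> I * \<beta> (K - I)) \<noteq> 0"
    by (simp add: wedge_eq_Pow_sum[OF K])
  then obtain I where "I \<subseteq> K" "sgn_sh I (K - I) * \<alpha> I * \<beta> (K - I) \<noteq> 0"
    by (meson PowD sum.not_neutral_contains_not_neutral)
  then have "card I = p" "card (K - I) = q"
    using assms by (auto simp: homogeneous_def)
  with \<open>I \<subseteq> K\<close> \<open>finite K\<close> show "card K = p + q"
    by (metis card_Diff_subset card_mono finite_subset le_add_diff_inverse)
qed

lemma homogeneous_top_degree_wedge_eq_zero:
  assumes "homogeneous (wedge \<alpha> \<beta>) 6" "wedge \<alpha> \<beta> {1,2,3,4,5,6} = 0"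
  shows "wedge \<alpha> \<beta> = zero_form"
proof
  fix K
  show "wedge \<alpha> \<beta> K = zero_form K"
  proof (cases "K \<subseteq> {1..6} \<and> card K = 6")
    case True
    then have "K = {1..6}"
      by (intro card_subset_eq) auto
    also have "{1..6} = {1,2,3,4,5,6::nat}"
      by auto
    finally show ?thesis
      using assms(2) by (simp add: zero_form_def)
  next
    case False
    then show ?thesis
      using assms(1) wedge_outside unfolding homogeneous_def zero_form_def by meson
  qed
qed

lemma su3_structure_omega_nonzero:
  assumes "su3_structure \<omega> \<gamma>"
  shows "\<omega> \<noteq> zero_form"
proof
  assume "\<omega> = zero_form"
  obtain f :: "nat \<Rightarrow> form" where one_forms: "\<forall>i\<in>{1..6}. is_one_form (f i)"
    and top: "wedge (f 1) (wedge (f 2) (wedge (f 3) (wedge (f 4) (wedge (f 5) (f 6))))) \<noteq> zero_form"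
    and \<omega>: "\<omega> = (\<lambda>I. wedge (f 1) (f 2) I + wedge (f 3) (f 4) I + wedge (f 5) (f 6) I)"
    using assms unfolding su3_structure_def by blast
  have f: "is_one_form (f 1)" "is_one_form (f 2)" "is_one_form (f 3)"
    "is_one_form (f 4)" "is_one_form (f 5)" "is_one_form (f 6)"
    using one_forms by auto
  have "pfaffian \<omega> = 0"
    using \<open>\<omega> = zero_form\<close> by (simp add: pfaffian_def zero_form_def)
  then have "wedge (f 1) (wedge (f 2) (wedge (f 3) (wedge (f 4) (wedge (f 5) (f 6))))) {1,2,3,4,5,6} = 0"
    unfolding \<omega> wedge6_top_eq_pfaffian[OF f] .
  moreover have "homogeneous (wedge (f 1) (wedge (f 2) (wedge (f 3) (wedge (f 4) (wedge (f 5) (f 6)))))) 6"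
    using homogeneous_wedge[OF homogeneous_one_form homogeneous_wedge[OF homogeneous_one_form
        homogeneous_wedge[OF homogeneous_one_form homogeneous_wedge[OF homogeneous_one_form
        homogeneous_wedge[OF homogeneous_one_form homogeneous_one_form]]]], OF f]
    by (simp add: eval_nat_numeral)
  ultimately show False
    using top homogeneous_top_degree_wedge_eq_zero by blast
qed

definition de_support :: "nat \<Rightarrow> nat set" where
  "de_support k = (if k = 1 then {3,5} else if k = 3 then {1,5} else if k = 5 then {1,3}
     else if k = 2 then {4,6} else if k = 4 then {2,6} else {2,4})"

definition de_sign :: "nat \<Rightarrow> real" where
  "de_sign k = (if k = 3 \<or> k = 4 then -1 else 1)"

lemma de1_eq_monomial:
  "k \<in> {1..6} \<Longrightarrow> de1 k = (\<lambda>I. if I = de_support k then de_sign k else 0)"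
  by (auto simp: atLeastAtMost_iff le_Suc_eq de1_def wedge_eb_eb de_support_def de_sign_def fun_eq_iff)

lemma dext_apply:
  "dext \<alpha> K = (\<Sum>k\<in>{1,2,3,4,5,6}. if K \<subseteq> {1..6} \<and> de_support k \<subseteq> K
     then sgn_sh (de_support k) (K - de_support k) * de_sign k * interior k \<alpha> (K - de_support k) else 0)"
proof -
  have wedge_de1: "wedge (de1 k) (interior k \<alpha>) K = (if K \<subseteq> {1..6} \<and> de_support k \<subseteq> K
     then sgn_sh (de_support k) (K - de_support k) * de_sign k * interior k \<alpha> (K - de_support k) else 0)"
    if "k \<in> {1..6}" for k
    using that by (simp add: de1_eq_monomial wedge_monomial_left[where S = "de_support k"])
  have "{1..6::nat} = {1,2,3,4,5,6}"
    by auto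
  then show ?thesis
    unfolding dext_def by (rule sum.cong) (rule wedge_de1, auto)
qed

lemma AB_form_apply:
  "AB_form K I =
       K 1 1 * (if I \<subseteq> {1,2} \<and> 1 \<in> I \<and> 2 \<in> I then 1 else 0)
     + K 1 2 * (if I \<subseteq> {1,4} \<and> 1 \<in> I \<and> 4 \<in> I then 1 else 0)
     + K 1 3 * (if I \<subseteq> {1,6} \<and> 1 \<in> I \<and> 6 \<in> I then 1 else 0)
     + K 2 1 * (if I \<subseteq> {3,2} \<and> 3 \<in> I \<and> 2 \<in> I then -1 else 0)
     + K 2 2 * (if I \<subseteq> {3,4} \<and> 3 \<in> I \<and> 4 \<in> I then 1 else 0)
     + K 2 3 * (if I \<subseteq> {3,6} \<and> 3 \<in> I \<and> 6 \<in> I then 1 else 0)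
     + K 3 1 * (if I \<subseteq> {5,2} \<and> 5 \<in> I \<and> 2 \<in> I then -1 else 0)
     + K 3 2 * (if I \<subseteq> {5,4} \<and> 5 \<in> I \<and> 4 \<in> I then -1 else 0)
     + K 3 3 * (if I \<subseteq> {5,6} \<and> 5 \<in> I \<and> 6 \<in> I then 1 else 0)"
proof -
  have "{1..3::nat} = {1,2,3}"
    by auto
  moreover have "I = {p, q} \<longleftrightarrow> I \<subseteq> {p, q} \<and> p \<in> I \<and> q \<in> I" for p q :: nat
    by auto
  ultimately show ?thesis
    unfolding AB_form_def by (simp add: wedge_eb_eb split del: if_split cong: if_cong)
qed

definition A2B_triple :: "nat \<Rightarrow> nat \<Rightarrow> nat set" where
  "A2B_triple i j = insert (2*j) ({1,3,5} - {2*i - 1})"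

lemma A2B_triple_ne_A3_B3: "A2B_triple i j \<noteq> {1,3,5}" "A2B_triple i j \<noteq> {2,4,6}"
proof -
  have "2*j \<in> A2B_triple i j" "2*j \<notin> {1,3,5}"
    unfolding A2B_triple_def by auto presburger+
  moreover have "{1,3,5} - {2*i - 1} \<noteq> {}" "({1,3,5} - {2*i - 1}) \<inter> {2,4,6} = {}"
    by auto
  ultimately show "A2B_triple i j \<noteq> {1,3,5}" "A2B_triple i j \<noteq> {2,4,6}"
    unfolding A2B_triple_def by blast+
qed

lemma dext_AB_form_A2B_triple:
  assumes "i \<in> {1,2,3}" "j \<in> {1,2,3}"
  shows "dext (AB_form K) (A2B_triple i j) = (if (i, j) \<in> {(1,2), (2,3), (3,1)} then -1 else 1) * K i j"
  using assms unfolding A2B_triple_def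
  by (elim insertE emptyE; simp add: dext_apply de_support_def de_sign_def sgn_sh_eq_prod
      interior_def AB_form_apply insert_Diff_if)

lemma dext_AB_form_A3: "dext (AB_form K) {1,3,5} = 0"
  by (simp add: dext_apply de_support_def de_sign_def sgn_sh_eq_prod interior_def AB_form_apply insert_Diff_if)

lemma dext_AB_form_B3: "dext (AB_form K) {2,4,6} = 0"
  by (simp add: dext_apply de_support_def de_sign_def sgn_sh_eq_prod interior_def AB_form_apply insert_Diff_if)

lemma w3_eb_eq_monomial:
  assumes "1 \<le> p" "p < q" "q < r" "r \<le> 6"
  shows "w3 (eb p) (eb q) (eb r) = (\<lambda>I. if I = {p, q, r} then 1 else 0)"
proof
  fix I
  have "(p \<in> I \<and> I - {p} = {q, r}) \<longleftrightarrow> I = {p, q, r}"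
    using assms by auto
  moreover have "sgn_sh {p} {q, r} = 1"
    using assms by (simp add: sgn_sh_eq_prod)
  ultimately show "w3 (eb p) (eb q) (eb r) I = (if I = {p, q, r} then 1 else 0)"
    using assms by (auto simp: w3_def wedge_eb_left wedge_eb_eb)
qed

lemma AB_form_eq_zero:
  assumes "\<And>i j. i \<in> {1,2,3} \<Longrightarrow> j \<in> {1,2,3} \<Longrightarrow> K i j = 0"
  shows "AB_form K = zero_form"
proof -
  have "{1..3::nat} = {1,2,3}"
    by auto
  then show ?thesis
    unfolding AB_form_def zero_form_def using assms by (intro ext sum.neutral ballI) simp
qed

lemma Phi_scale:
  assumes "\<And>i j. i \<in> {1,2,3} \<Longrightarrow> j \<in> {1,2,3} \<Longrightarrow> k i j = \<mu> * k' i j"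
  shows "Phi k = (\<lambda>r s. \<mu> * Phi k' r s)"
  using assms by (auto simp: Phi_def fun_eq_iff algebra_simps)

theorem mainTheorem4:
  fixes Kw Kb :: "nat \<Rightarrow> nat \<Rightarrow> real" and a b \<mu> :: real
  assumes hf: "half_flat (AB_form Kw)
      (\<lambda>I. a * w3 (eb 1) (eb 3) (eb 5) I + b * w3 (eb 2) (eb 4) (eb 6) I + dext (AB_form Kb) I)"
    and coupled: "dext (AB_form Kw) =
      (\<lambda>I. \<mu> * (a * w3 (eb 1) (eb 3) (eb 5) I + b * w3 (eb 2) (eb 4) (eb 6) I + dext (AB_form Kb) I))"
  shows "\<mu> \<noteq> 0 \<and> a = 0 \<and> b = 0 \<and> Phi Kw = (\<lambda>r s. \<mu> * Phi Kb r s)"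
proof -
  have coupled_at: "dext (AB_form Kw) S =
      \<mu> * (a * w3 (eb 1) (eb 3) (eb 5) S + b * w3 (eb 2) (eb 4) (eb 6) S + dext (AB_form Kb) S)" for S
    using fun_cong[OF coupled] by simp
  have e135: "w3 (eb 1) (eb 3) (eb 5) = (\<lambda>I. if I = {1,3,5} then 1 else 0)"
    and e246: "w3 (eb 2) (eb 4) (eb 6) = (\<lambda>I. if I = {2,4,6} then 1 else 0)"
    by (simp_all add: w3_eb_eq_monomial)
  have "{1,3,5} \<noteq> {2,4,6::nat}"
    by auto
  then have "\<mu> * a = 0" "\<mu> * b = 0"
    using coupled_at[of "{1,3,5}"] coupled_at[of "{2,4,6}"] dext_AB_form_A3 dext_AB_form_B3
    unfolding e135 e246 by simp_all
  moreover have entries: "Kw i j = \<mu> * Kb i j" if "i \<in> {1,2,3}" "j \<in> {1,2,3}" for i j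
    using coupled_at[of "A2B_triple i j"] A2B_triple_ne_A3_B3
    unfolding e135 e246 dext_AB_form_A2B_triple[OF that] by (simp split: if_split_asm)
  moreover have "\<mu> \<noteq> 0"
  proof
    assume "\<mu> = 0"
    then have "AB_form Kw = zero_form"
      using entries by (intro AB_form_eq_zero) simp
    then show False
      using hf su3_structure_omega_nonzero unfolding half_flat_def by blast
  qed
  ultimately show ?thesis
    using Phi_scale[OF entries] by simp
qed

end
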